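(* With the setup of the context, assume that $\overline H$ satisfies the bunkbed conjecture and let $\mu$ be a symmetric weight on $F$. Then for all $x,y\in V(\overline H)$, $\mathbb P_{F,\mu}(x^-\sim_F y^+)\le \mathbb P_{F,\mu}(x^-\sim_F y^-)$.
   Context: All graphs are finite and simple. For a graph $G$, a weight is a function $\mu\colon E(G)\to[0,1]$; the associated edge-percolation probability space has sample space $\mathscr P(E(G))$, with $\mathbb P_{G,\mu}(X)=\prod_{e\in X}\mu(e)\prod_{e\notin X}(1-\mu(e))$ for $X\subseteq E(G)$ (edges independently open, edge $e$ with probability $\mu(e)$). For vertices $x,y$, $(x\sim_G y)$ is the event that $x$ and $y$ are joined by a path of open edges of $G$. The bunkbed graph $BB(G)=G\,\Box\,K_2$ has vertex set $V(G)\times\{0,1\}$, writing $x^-=(x,0)$, $x^+=(x,1)$, with edges $x^-y^-$ and $x^+y^+$ for every $xy\in E(G)$ and vertical edges $x^-x^+$ for every $x\in V(G)$. A weight $\mu$ on $BB(G)$ is symmetric if $\mu(x^-y^-)=\mu(x^+y^+)$ for every $xy\in E(G)$. A graph $G$ satisfies the bunkbed conjecture if for every symmetric weight $\mu$ on $BB(G)$ and all $x,y\in V(G)$, $\mathbb P_{BB(G),\mu}(x^-\sim y^-)\ge \mathbb P_{BB(G),\mu}(x^-\sim y^+)$. Setup: let $\overline F$ be a graph and $v\in V(\overline F)$ a cut vertex; let $V_1,\dots,V_k$ ($k\ge2$) be the vertex sets of the components of $\overline F\setminus\{v\}$, fix $I\subseteq\{1,\dots,k\}$, and set $\overline G=\overline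 F[\bigcup_{i\in I}V_i\cup\{v\}]$, $\overline H=\overline F[\bigcup_{i\notin I}V_i\cup\{v\}]$ (induced subgraphs). Let $F=BB(\overline F)$, $G=BB(\overline G)$, $H=BB(\overline H)$, regarded as subgraphs of $F$. *)

theory Defs
  imports Complex_Main
begin

definition simple_graph :: "'a set \<Rightarrow> 'a set set \<Rightarrow> bool" where
  "simple_graph V E \<longleftrightarrow> finite V \<and> (\<forall>e\<in>E. \<exists>a b. a \<noteq> b \<and> a \<in> V \<and> b \<in> V \<and> e = {a, b})"

definition joined :: "'a set set \<Rightarrow> 'a \<Rightarrow> 'a \<Rightarrow> bool" where
  "joined X a b \<longleftrightarrow> (\<lambda>u w. {u, w} \<in> X)\<^sup>*\<^sup>* a b"

definition components :: "'a set \<Rightarrow> 'a set set \<Rightarrow> 'a set set" where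
  "components V E = {{y \<in> V. joined E x y} | x. x \<in> V}"

definition del_vertex_V :: "'a set \<Rightarrow> 'a \<Rightarrow> 'a set" where
  "del_vertex_V V v = V - {v}"
definition del_vertex_E :: "'a set set \<Rightarrow> 'a \<Rightarrow> 'a set set" where
  "del_vertex_E E v = {e \<in> E. v \<notin> e}"

definition cut_vertex :: "'a set \<Rightarrow> 'a set set \<Rightarrow> 'a \<Rightarrow> bool" where
  "cut_vertex V E v \<longleftrightarrow> v \<in> V \<and>
     card (components (del_vertex_V V v) (del_vertex_E E v)) > card (components V E)"

definition induced_E :: "'a set set \<Rightarrow> 'a set \<Rightarrow> 'a set set" where
  "induced_E E W = {e \<in> E. e \<subseteq> W}"

text \<open>Bunkbed graph: x^- = (x,False), x^+ = (x,True).\<close>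
definition bb_V :: "'a set \<Rightarrow> ('a \<times> bool) set" where
  "bb_V V = V \<times> UNIV"
definition bb_E :: "'a set \<Rightarrow> 'a set set \<Rightarrow> ('a \<times> bool) set set" where
  "bb_E V E = {{(x, b), (y, b)} | x y b. {x, y} \<in> E} \<union> {{(x, False), (x, True)} | x. x \<in> V}"

definition weight :: "'b set set \<Rightarrow> ('b set \<Rightarrow> real) \<Rightarrow> bool" where
  "weight Ed \<mu> \<longleftrightarrow> (\<forall>e\<in>Ed. 0 \<le> \<mu> e \<and> \<mu> e \<le> 1)"

definition symmetric_weight :: "'a set \<Rightarrow> 'a set set \<Rightarrow> (('a \<times> bool) set \<Rightarrow> real) \<Rightarrow> bool" where
  "symmetric_weight V E \<mu> \<longleftrightarrow> weight (bb_E V E) \<mu> \<and>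
     (\<forall>x y. {x, y} \<in> E \<longrightarrow> \<mu> {(x, False), (y, False)} = \<mu> {(x, True), (y, True)})"

definition perc_prob :: "'b set set \<Rightarrow> ('b set \<Rightarrow> real) \<Rightarrow> ('b set set \<Rightarrow> bool) \<Rightarrow> real" where
  "perc_prob Ed \<mu> A = (\<Sum>X\<in>{X. X \<subseteq> Ed \<and> A X}. (\<Prod>e\<in>X. \<mu> e) * (\<Prod>e\<in>Ed - X. 1 - \<mu> e))"

definition bunkbed_conj :: "'a set \<Rightarrow> 'a set set \<Rightarrow> bool" where
  "bunkbed_conj V E \<longleftrightarrow> (\<forall>\<mu>. symmetric_weight V E \<mu> \<longrightarrow> (\<forall>x\<in>V. \<forall>y\<in>V.
     perc_prob (bb_E V E) \<mu> (\<lambda>X. joined X (x, False) (y, True))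
       \<le> perc_prob (bb_E V E) \<mu> (\<lambda>X. joined X (x, False) (y, False))))"

end

theory Submission
  imports Defs
begin

text \<open>Split the edges of the bunkbed of \<open>F\<close> into those of the bunkbed of \<open>H\<close> and the rest.
  Since \<open>v\<close> is a cut vertex, every remaining edge meets the bunkbed of \<open>H\<close> only in \<open>v\<^sup>-\<close>
  or \<open>v\<^sup>+\<close>; hence, between vertices of \<open>H\<close>, the remaining edges matter only through the
  event that they join \<open>v\<^sup>-\<close> to \<open>v\<^sup>+\<close>. This event, of probability \<open>p\<close> say, is independent of
  the edges of \<open>H\<close> and acts as an extra edge in parallel with the vertical edge \<open>v\<^sup>-v\<^sup>+\<close>.
  Raising the weight of that edge from \<open>q\<close> to \<open>1 - (1 - q)(1 - p)\<close> therefore gives a symmetric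
  weight on the bunkbed of \<open>H\<close> with the same connection probabilities, and the bunkbed
  conjecture for \<open>H\<close> applies.\<close>

definition perc_weight :: "'b set set \<Rightarrow> ('b set \<Rightarrow> real) \<Rightarrow> 'b set set \<Rightarrow> real" where
  "perc_weight Ed \<mu> X = (\<Prod>e\<in>X. \<mu> e) * (\<Prod>e\<in>Ed - X. 1 - \<mu> e)"

lemma perc_prob_eq_sum:
  assumes "finite Ed"
  shows "perc_prob Ed \<mu> A = (\<Sum>X\<in>Pow Ed. perc_weight Ed \<mu> X * of_bool (A X))"
proof -
  have "perc_prob Ed \<mu> A = sum (perc_weight Ed \<mu>) {X \<in> Pow Ed. A X}"
    unfolding perc_prob_def perc_weight_def by (rule sum.cong) auto
  also have "\<dots> = (\<Sum>X\<in>Pow Ed. perc_weight Ed \<mu> X * of_bool (A X))"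
    using sum.inter_filter[of "Pow Ed" "perc_weight Ed \<mu>" A] assms
    by (simp add: of_bool_def) (auto intro: sum.cong)
  finally show ?thesis .
qed

lemma sum_perc_weight:
  assumes "finite Ed"
  shows "(\<Sum>X\<in>Pow Ed. perc_weight Ed \<mu> X) = 1"
  using prod_add[OF assms, of \<mu> "\<lambda>e. 1 - \<mu> e"] by (simp add: perc_weight_def)

lemma perc_weight_nonneg:
  assumes "weight Ed \<mu>" "X \<subseteq> Ed"
  shows "0 \<le> perc_weight Ed \<mu> X"
  using assms unfolding perc_weight_def weight_def
  by (intro mult_nonneg_nonneg prod_nonneg) auto

lemma perc_weight_cong:
  assumes "\<And>e. e \<in> Ed \<Longrightarrow> \<mu> e = \<mu>' e" "X \<subseteq> Ed"
  shows "perc_weight Ed \<mu> X = perc_weight Ed \<mu>' X"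
  unfolding perc_weight_def using assms by (auto intro!: arg_cong2[where f = "(*)"] prod.cong)

lemma perc_prob_nonneg:
  assumes "finite Ed" "weight Ed \<mu>"
  shows "0 \<le> perc_prob Ed \<mu> A"
  using assms perc_weight_nonneg by (auto simp: perc_prob_eq_sum intro!: sum_nonneg)

lemma perc_prob_le_1:
  assumes "finite Ed" "weight Ed \<mu>"
  shows "perc_prob Ed \<mu> A \<le> 1"
proof -
  have "perc_prob Ed \<mu> A \<le> (\<Sum>X\<in>Pow Ed. perc_weight Ed \<mu> X)"
    unfolding perc_prob_eq_sum[OF assms(1)]
    by (intro sum_mono) (auto intro: perc_weight_nonneg[OF assms(2)])
  then show ?thesis using sum_perc_weight[OF assms(1)] by simp
qed

lemma sum_perc_weight_if:
  assumes "finite Ed"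
  shows "(\<Sum>X\<in>Pow Ed. perc_weight Ed \<mu> X * (if A X then a else b))
       = perc_prob Ed \<mu> A * a + (1 - perc_prob Ed \<mu> A) * b"
proof -
  have "(\<Sum>X\<in>Pow Ed. perc_weight Ed \<mu> X * (if A X then a else b))
      = (\<Sum>X\<in>Pow Ed. perc_weight Ed \<mu> X * of_bool (A X) * (a - b) + perc_weight Ed \<mu> X * b)"
    by (intro sum.cong) (auto simp: algebra_simps)
  also have "\<dots> = perc_prob Ed \<mu> A * (a - b) + b"
    by (simp only: sum.distrib sum_distrib_right[symmetric])
      (simp add: assms perc_prob_eq_sum[OF assms, symmetric] sum_perc_weight)
  finally show ?thesis by (simp add: algebra_simps)
qed

lemma perc_weight_Un:
  assumes "finite D1" "finite D2" "D1 \<inter> D2 = {}" "X1 \<subseteq> D1" "X2 \<subseteq> D2"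
  shows "perc_weight (D1 \<union> D2) \<mu> (X1 \<union> X2) = perc_weight D1 \<mu> X1 * perc_weight D2 \<mu> X2"
proof -
  have "finite X1" "finite X2" using assms finite_subset by blast+
  then have "(\<Prod>e\<in>X1 \<union> X2. \<mu> e) = (\<Prod>e\<in>X1. \<mu> e) * (\<Prod>e\<in>X2. \<mu> e)"
    using assms by (intro prod.union_disjoint) auto
  moreover have "(D1 \<union> D2) - (X1 \<union> X2) = (D1 - X1) \<union> (D2 - X2)" using assms by auto
  moreover have "(\<Prod>e\<in>(D1 - X1) \<union> (D2 - X2). 1 - \<mu> e)
      = (\<Prod>e\<in>D1 - X1. 1 - \<mu> e) * (\<Prod>e\<in>D2 - X2. 1 - \<mu> e)"
    using assms by (intro prod.union_disjoint) auto
  ultimately show ?thesis unfolding perc_weight_def by (simp add: algebra_simps)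
qed

lemma sum_Pow_Un_perc_weight:
  assumes "finite D1" "finite D2" "D1 \<inter> D2 = {}"
  shows "(\<Sum>X\<in>Pow (D1 \<union> D2). perc_weight (D1 \<union> D2) \<mu> X * f X)
       = (\<Sum>X1\<in>Pow D1. \<Sum>X2\<in>Pow D2. perc_weight D1 \<mu> X1 * perc_weight D2 \<mu> X2 * f (X1 \<union> X2))"
proof -
  have "bij_betw (\<lambda>(X1, X2). X1 \<union> X2) (Pow D1 \<times> Pow D2) (Pow (D1 \<union> D2))"
    by (rule bij_betw_byWitness[where f' = "\<lambda>X. (X \<inter> D1, X \<inter> D2)"]) (use assms(3) in auto)
  then have "(\<Sum>X\<in>Pow (D1 \<union> D2). perc_weight (D1 \<union> D2) \<mu> X * f X)
      = (\<Sum>(X1, X2)\<in>Pow D1 \<times> Pow D2. perc_weight (D1 \<union> D2) \<mu> (X1 \<union> X2) * f (X1 \<union> X2))"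
    by (simp add: sum.reindex_bij_betw[symmetric] case_prod_beta)
  also have "\<dots> = (\<Sum>(X1, X2)\<in>Pow D1 \<times> Pow D2. perc_weight D1 \<mu> X1 * perc_weight D2 \<mu> X2 * f (X1 \<union> X2))"
    using assms by (intro sum.cong) (auto simp: perc_weight_Un)
  finally show ?thesis by (simp add: sum.cartesian_product)
qed

lemma sum_Pow_insert_perc_weight:
  assumes "finite D" "e \<notin> D"
  shows "(\<Sum>X\<in>Pow (insert e D). perc_weight (insert e D) \<mu> X * f X)
       = (\<Sum>Y\<in>Pow D. perc_weight D \<mu> Y * ((1 - \<mu> e) * f Y + \<mu> e * f (insert e Y)))"
proof -
  have "(\<Sum>X\<in>Pow (D \<union> {e}). perc_weight (D \<union> {e}) \<mu> X * f X)
      = (\<Sum>Y\<in>Pow D. \<Sum>Z\<in>Pow {e}. perc_weight D \<mu> Y * perc_weight {e} \<mu> Z * f (Y \<union> Z))"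
    using assms by (intro sum_Pow_Un_perc_weight) auto
  also have "\<dots> = (\<Sum>Y\<in>Pow D. perc_weight D \<mu> Y * ((1 - \<mu> e) * f Y + \<mu> e * f (insert e Y)))"
  proof (intro sum.cong refl)
    fix Y
    have "Pow {e} = {{}, {e}}" by auto
    moreover have "perc_weight {e} \<mu> {} = 1 - \<mu> e" "perc_weight {e} \<mu> {e} = \<mu> e"
      by (simp_all add: perc_weight_def)
    ultimately show "(\<Sum>Z\<in>Pow {e}. perc_weight D \<mu> Y * perc_weight {e} \<mu> Z * f (Y \<union> Z))
        = perc_weight D \<mu> Y * ((1 - \<mu> e) * f Y + \<mu> e * f (insert e Y))"
      by simp (simp add: algebra_simps)
  qed
  finally show ?thesis by simp
qed

definition weight_parallel :: "'b set \<Rightarrow> real \<Rightarrow> ('b set \<Rightarrow> real) \<Rightarrow> 'b set \<Rightarrow> real" where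
  "weight_parallel e p \<mu> = \<mu>(e := 1 - (1 - \<mu> e) * (1 - p))"

lemma perc_prob_contract:
  assumes fin: "finite E1" "finite E2" and disj: "E1 \<inter> E2 = {}" and "e \<in> E1"
    and A: "\<And>X1 X2. X1 \<subseteq> E1 \<Longrightarrow> X2 \<subseteq> E2 \<Longrightarrow>
              A (X1 \<union> X2) \<longleftrightarrow> B (if C X2 then insert e X1 else X1)"
  shows "perc_prob (E1 \<union> E2) \<mu> A = perc_prob E1 (weight_parallel e (perc_prob E2 \<mu> C) \<mu>) B"
proof -
  define p where "p = perc_prob E2 \<mu> C"
  define \<mu>' where "\<mu>' = weight_parallel e p \<mu>"
  define D where "D = E1 - {e}"
  have E1: "E1 = insert e D" and D: "finite D" "e \<notin> D"
    using \<open>e \<in> E1\<close> fin by (auto simp: D_def)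
  have \<mu>'_D: "perc_weight D \<mu>' Y = perc_weight D \<mu> Y" if "Y \<subseteq> D" for Y
    using that D by (intro perc_weight_cong) (auto simp: \<mu>'_def weight_parallel_def)
  have \<mu>'_e: "\<mu>' e = 1 - (1 - \<mu> e) * (1 - p)"
    by (simp add: \<mu>'_def weight_parallel_def)
  have "perc_prob (E1 \<union> E2) \<mu> A = (\<Sum>X1\<in>Pow E1. \<Sum>X2\<in>Pow E2.
          perc_weight E1 \<mu> X1 * perc_weight E2 \<mu> X2 * of_bool (A (X1 \<union> X2)))"
    unfolding perc_prob_eq_sum[OF finite_UnI[OF fin]] using fin disj by (rule sum_Pow_Un_perc_weight)
  also have "\<dots> = (\<Sum>X1\<in>Pow E1. perc_weight E1 \<mu> X1 *
                     ((1 - p) * of_bool (B X1) + p * of_bool (B (insert e X1))))"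
  proof (intro sum.cong refl)
    fix X1 assume "X1 \<in> Pow E1"
    then have "(\<Sum>X2\<in>Pow E2. perc_weight E1 \<mu> X1 * perc_weight E2 \<mu> X2 * of_bool (A (X1 \<union> X2)))
        = perc_weight E1 \<mu> X1 * (\<Sum>X2\<in>Pow E2. perc_weight E2 \<mu> X2 *
            (if C X2 then of_bool (B (insert e X1)) else of_bool (B X1)))"
      unfolding sum_distrib_left mult.assoc using A by (intro sum.cong refl) auto
    then show "(\<Sum>X2\<in>Pow E2. perc_weight E1 \<mu> X1 * perc_weight E2 \<mu> X2 * of_bool (A (X1 \<union> X2)))
        = perc_weight E1 \<mu> X1 * ((1 - p) * of_bool (B X1) + p * of_bool (B (insert e X1)))"
      by (simp add: sum_perc_weight_if[OF fin(2)] p_def algebra_simps)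
  qed
  also have "\<dots> = (\<Sum>Y\<in>Pow D. perc_weight D \<mu>' Y *
                     ((1 - \<mu>' e) * of_bool (B Y) + \<mu>' e * of_bool (B (insert e Y))))"
    unfolding E1 sum_Pow_insert_perc_weight[OF D]
    by (intro sum.cong refl) (simp add: \<mu>'_D \<mu>'_e algebra_simps)
  also have "\<dots> = perc_prob E1 \<mu>' B"
    unfolding E1 perc_prob_eq_sum[OF finite.insertI[OF D(1)]]
    using D by (rule sum_Pow_insert_perc_weight[symmetric])
  finally show ?thesis by (simp add: p_def \<mu>'_def)
qed

lemma joined_refl [simp]: "joined X a a"
  unfolding joined_def by simp

lemma joined_step: "joined X a b \<Longrightarrow> {b, c} \<in> X \<Longrightarrow> joined X a c"
  unfolding joined_def by (rule rtranclp.rtrancl_into_rtrancl)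

lemma joined_edge: "{a, b} \<in> X \<Longrightarrow> joined X a b"
  using joined_step[OF joined_refl] .

lemma joined_trans: "joined X a b \<Longrightarrow> joined X b c \<Longrightarrow> joined X a c"
  unfolding joined_def by (rule rtranclp_trans)

lemma joined_sym: "joined X a b \<Longrightarrow> joined X b a"
  unfolding joined_def[of X a b]
proof (induction rule: rtranclp_induct)
  case (step b c)
  then have "{c, b} \<in> X" by (simp add: insert_commute)
  then show ?case using step.IH by (rule joined_trans[OF joined_edge])
qed simp

lemma joined_mono:
  assumes "joined Y a b" "\<And>u w. {u, w} \<in> Y \<Longrightarrow> joined X u w"
  shows "joined X a b"
  using assms(1) unfolding joined_def[of Y]
proof (induction rule: rtranclp_induct)
  case (step b c)
  show ?case by (rule joined_trans[OF step.IH assms(2)[OF step.hyps(2)]])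
qed simp

lemma joined_invariant:
  assumes "joined X a c" "P a" "\<And>ed p. ed \<in> X \<Longrightarrow> p \<in> ed \<Longrightarrow> P p"
  shows "P c"
  using assms(1) unfolding joined_def
proof (induction rule: rtranclp_induct)
  case (step b c)
  show ?case using assms(3)[OF step.hyps(2)] by simp
qed (rule assms(2))

definition shortcut :: "'b set set \<Rightarrow> 'b set set \<Rightarrow> 'b set set \<Rightarrow> 'b \<Rightarrow> 'b \<Rightarrow> 'b set set" where
  "shortcut X E1 E2 s t = X \<inter> E1 \<union> (if joined (X \<inter> E2) s t then {{s, t}} else {})"

lemma joined_shortcut_imp_joined:
  assumes "joined (shortcut X E1 E2 s t) a b"
  shows "joined X a b"
  using assms
proof (rule joined_mono)
  fix u w assume "{u, w} \<in> shortcut X E1 E2 s t"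
  then consider "{u, w} \<in> X" | "{u, w} = {s, t}" "joined (X \<inter> E2) s t"
    by (auto simp: shortcut_def split: if_splits)
  then show "joined X u w"
  proof cases
    case 2
    have "joined X s t"
      using 2(2) by (rule joined_mono) (simp add: joined_edge)
    moreover have "u = s \<and> w = t \<or> u = t \<and> w = s"
      using 2(1) by (simp add: doubleton_eq_iff)
    ultimately show ?thesis by (metis joined_sym)
  qed (rule joined_edge)
qed

lemma joined_shortcut_return:
  assumes E2: "\<And>ed. ed \<in> E2 \<Longrightarrow> ed \<inter> U \<subseteq> {s, t}"
    and a_s': "joined (shortcut X E1 E2 s t) a s'" and s': "s' \<in> {s, t}"
    and s'_c: "joined (X \<inter> E2) s' c" and "c \<in> U"
  shows "joined (shortcut X E1 E2 s t) a c"
proof (cases "c = s'")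
  case False
  have "c \<notin> U \<or> c \<in> {s, t}"
    by (rule joined_invariant[where P = "\<lambda>c. c \<notin> U \<or> c \<in> {s, t}", OF s'_c])
      (use s' E2 in blast)+
  with \<open>c \<in> U\<close> False s' have "s' = s \<and> c = t \<or> s' = t \<and> c = s" by blast
  then have "{s', c} = {s, t} \<and> joined (X \<inter> E2) s t"
  proof (elim disjE conjE)
    assume "s' = t" "c = s"
    then show ?thesis using joined_sym[OF s'_c] by (simp add: insert_commute)
  qed (use s'_c in simp)
  then show ?thesis using joined_step[OF a_s'] by (simp add: shortcut_def)
qed (use a_s' in simp)

lemma joined_imp_joined_shortcut:
  assumes X: "X \<subseteq> E1 \<union> E2"
    and E1: "\<And>ed. ed \<in> E1 \<Longrightarrow> ed \<subseteq> U"
    and E2: "\<And>ed. ed \<in> E2 \<Longrightarrow> ed \<inter> U \<subseteq> {s, t}"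
    and "s \<in> U" "t \<in> U" "a \<in> U" "joined X a b" "b \<in> U"
  shows "joined (shortcut X E1 E2 s t) a b"
proof -
  let ?Y = "shortcut X E1 E2 s t"
  have "ed \<subseteq> U" if "ed \<in> ?Y" for ed
    using that E1 \<open>s \<in> U\<close> \<open>t \<in> U\<close> by (auto simp: shortcut_def split: if_splits)
  then have in_U: "c \<in> U" if "joined ?Y a c" for c
    using joined_invariant[where P = "\<lambda>c. c \<in> U", OF that \<open>a \<in> U\<close>] by blast
  note return = joined_shortcut_return[OF E2]
  \<comment> \<open>A walk from \<open>a\<close> leaves \<open>U\<close> only on excursions through \<open>E2\<close> starting at \<open>s\<close> or \<open>t\<close>.\<close>
  have "joined ?Y a c \<or> (\<exists>s'\<in>{s, t}. joined ?Y a s' \<and> joined (X \<inter> E2) s' c)"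
    if "joined X a c" for c
    using that unfolding joined_def[of X]
  proof (induction rule: rtranclp_induct)
    case (step c d)
    from step.hyps(2) X consider (inside) "{c, d} \<in> X \<inter> E1" | (outside) "{c, d} \<in> X \<inter> E2"
      by blast
    then show ?case
    proof cases
      case inside
      have "joined ?Y a c"
        using step.IH
      proof
        assume "\<exists>s'\<in>{s, t}. joined ?Y a s' \<and> joined (X \<inter> E2) s' c"
        moreover have "c \<in> U" using inside E1 by blast
        ultimately show "joined ?Y a c" using return by blast
      qed
      moreover have "{c, d} \<in> ?Y" using inside by (simp add: shortcut_def)
      ultimately show ?thesis by (simp add: joined_step)
    next
      case outside
      from step.IH show ?thesis
      proof
        assume a_c: "joined ?Y a c"
        then have "c \<in> {s, t}" using in_U E2[of "{c, d}"] outside by blast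
        moreover have "joined (X \<inter> E2) c d" using outside by (rule joined_edge)
        ultimately show ?thesis using a_c by blast
      next
        assume "\<exists>s'\<in>{s, t}. joined ?Y a s' \<and> joined (X \<inter> E2) s' c"
        then obtain s' where "s' \<in> {s, t}" "joined ?Y a s'" "joined (X \<inter> E2) s' c" by blast
        moreover from this(3) outside have "joined (X \<inter> E2) s' d" by (rule joined_step)
        ultimately show ?thesis by blast
      qed
    qed
  qed simp
  then show ?thesis using \<open>joined X a b\<close> \<open>b \<in> U\<close> return by blast
qed

lemma simple_graph_edge_vertices:
  assumes "simple_graph V E" "{a, b} \<in> E"
  shows "a \<in> V" "b \<in> V"
proof -
  obtain a' b' where "a' \<in> V" "b' \<in> V" "{a, b} = {a', b'}"
    using assms unfolding simple_graph_def by blast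
  then show "a \<in> V" "b \<in> V" by (auto simp: doubleton_eq_iff)
qed

lemma bb_E_iff:
  "ed \<in> bb_E V E \<longleftrightarrow>
     (\<exists>x y b. ed = {(x, b), (y, b)} \<and> {x, y} \<in> E) \<or> (\<exists>x\<in>V. ed = {(x, False), (x, True)})"
  unfolding bb_E_def by blast

lemma finite_bb_E:
  assumes "simple_graph V E"
  shows "finite (bb_E V E)"
proof (rule finite_subset)
  show "bb_E V E \<subseteq> Pow (V \<times> UNIV)"
    using simple_graph_edge_vertices[OF assms] by (auto simp: bb_E_iff)
  show "finite (Pow (V \<times> (UNIV :: bool set)))"
    using assms by (simp add: simple_graph_def)
qed

lemma bb_E_induced_subset: "W \<subseteq> V \<Longrightarrow> bb_E W (induced_E E W) \<subseteq> bb_E V E"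
  unfolding bb_E_def induced_E_def by blast

lemma bb_E_induced_edge_subset: "ed \<in> bb_E W (induced_E E W) \<Longrightarrow> ed \<subseteq> W \<times> UNIV"
  by (auto simp: bb_E_iff induced_E_def)

lemma bb_E_outside_induced:
  assumes closed: "\<And>a b. {a, b} \<in> E \<Longrightarrow> a \<in> W \<Longrightarrow> a \<noteq> v \<Longrightarrow> b \<in> W"
    and ed: "ed \<in> bb_E V E - bb_E W (induced_E E W)"
  shows "ed \<inter> W \<times> UNIV \<subseteq> {(v, False), (v, True)}"
proof -
  from ed consider (horizontal) a b c where "ed = {(a, c), (b, c)}" "{a, b} \<in> E"
    | (vertical) a where "ed = {(a, False), (a, True)}"
    by (auto simp: bb_E_iff)
  then show ?thesis
  proof cases
    case horizontal
    have "\<not> (a \<in> W \<and> b \<in> W)"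
      using ed horizontal by (auto simp: bb_E_iff induced_E_def)
    moreover have "b \<in> W" if "a \<in> W" "a \<noteq> v"
      using closed horizontal(2) that .
    moreover have "a \<in> W" if "b \<in> W" "b \<noteq> v"
      using closed horizontal(2) that by (simp add: insert_commute)
    ultimately show ?thesis using horizontal by auto
  next
    case vertical
    then show ?thesis using ed by (auto simp: bb_E_iff)
  qed
qed

lemma perc_prob_bunkbed_induced:
  assumes "simple_graph V E" "W \<subseteq> V" "v \<in> W"
    and closed: "\<And>a b. {a, b} \<in> E \<Longrightarrow> a \<in> W \<Longrightarrow> a \<noteq> v \<Longrightarrow> b \<in> W"
    and "x \<in> W" "y \<in> W"
  shows "perc_prob (bb_E V E) \<mu> (\<lambda>X. joined X (x, False) (y, t))
       = perc_prob (bb_E W (induced_E E W))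
           (weight_parallel {(v, False), (v, True)}
              (perc_prob (bb_E V E - bb_E W (induced_E E W)) \<mu> (\<lambda>X. joined X (v, False) (v, True))) \<mu>)
           (\<lambda>X. joined X (x, False) (y, t))"
proof -
  let ?E1 = "bb_E W (induced_E E W)" and ?E2 = "bb_E V E - bb_E W (induced_E E W)"
  have E1_E2: "?E1 \<union> ?E2 = bb_E V E"
    using bb_E_induced_subset[OF \<open>W \<subseteq> V\<close>] by auto
  have fin: "finite ?E1" "finite ?E2"
    using finite_bb_E[OF assms(1)] E1_E2 by (auto intro: finite_subset)
  have disj: "?E1 \<inter> ?E2 = {}" by blast
  have e: "{(v, False), (v, True)} \<in> ?E1"
    using \<open>v \<in> W\<close> by (auto simp: bb_E_iff)
  have E1_inside: "ed \<subseteq> W \<times> UNIV" if "ed \<in> ?E1" for ed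
    using that by (rule bb_E_induced_edge_subset)
  have E2_meets: "ed \<inter> W \<times> UNIV \<subseteq> {(v, False), (v, True)}" if "ed \<in> ?E2" for ed
    using bb_E_outside_induced[OF closed that] by simp
  have "perc_prob (?E1 \<union> ?E2) \<mu> (\<lambda>X. joined X (x, False) (y, t))
      = perc_prob ?E1 (weight_parallel {(v, False), (v, True)}
          (perc_prob ?E2 \<mu> (\<lambda>X. joined X (v, False) (v, True))) \<mu>) (\<lambda>X. joined X (x, False) (y, t))"
  proof (rule perc_prob_contract[OF fin disj e])
    fix X1 X2 assume X: "X1 \<subseteq> ?E1" "X2 \<subseteq> ?E2"
    then have "(X1 \<union> X2) \<inter> ?E1 = X1" "(X1 \<union> X2) \<inter> ?E2 = X2" by auto
    moreover have "joined (X1 \<union> X2) (x, False) (y, t) \<longleftrightarrow>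
        joined (shortcut (X1 \<union> X2) ?E1 ?E2 (v, False) (v, True)) (x, False) (y, t)"
      using X \<open>v \<in> W\<close> \<open>x \<in> W\<close> \<open>y \<in> W\<close>
      by (blast intro: joined_shortcut_imp_joined
          joined_imp_joined_shortcut[where U = "W \<times> UNIV", OF _ E1_inside E2_meets])
    ultimately show "joined (X1 \<union> X2) (x, False) (y, t) \<longleftrightarrow>
        joined (if joined X2 (v, False) (v, True) then insert {(v, False), (v, True)} X1 else X1)
          (x, False) (y, t)"
      by (simp add: shortcut_def)
  qed
  then show ?thesis unfolding E1_E2 .
qed

lemma symmetric_weight_parallel:
  assumes sym: "symmetric_weight V E \<mu>" and "W \<subseteq> V" "v \<in> W" "0 \<le> p" "p \<le> 1"
  shows "symmetric_weight W (induced_E E W) (weight_parallel {(v, False), (v, True)} p \<mu>)"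
proof -
  let ?e = "{(v, False), (v, True)}"
  have "?e \<in> bb_E V E" using \<open>W \<subseteq> V\<close> \<open>v \<in> W\<close> by (auto simp: bb_E_iff)
  then have "0 \<le> \<mu> ?e" "\<mu> ?e \<le> 1"
    using sym by (simp_all add: symmetric_weight_def weight_def)
  then have "0 \<le> 1 - (1 - \<mu> ?e) * (1 - p)" "1 - (1 - \<mu> ?e) * (1 - p) \<le> 1"
    using \<open>0 \<le> p\<close> \<open>p \<le> 1\<close> by (simp_all add: mult_le_one)
  then have "weight (bb_E W (induced_E E W)) (weight_parallel ?e p \<mu>)"
    using sym bb_E_induced_subset[OF \<open>W \<subseteq> V\<close>]
    by (auto simp: weight_def symmetric_weight_def weight_parallel_def)
  moreover have "{(a, b), (c, b)} \<noteq> ?e" for a b c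
    by (auto simp: doubleton_eq_iff)
  ultimately show ?thesis
    using sym by (simp add: symmetric_weight_def weight_parallel_def induced_E_def)
qed

lemma components_subset: "K \<in> components V E \<Longrightarrow> K \<subseteq> V"
  by (auto simp: components_def)

lemma components_edge_closed:
  assumes "K \<in> components V E" "a \<in> K" "{a, b} \<in> E" "b \<in> V"
  shows "b \<in> K"
  using assms by (auto simp: components_def intro: joined_step)

lemma cut_side_closed:
  assumes "simple_graph V E" "\<K> \<subseteq> components (del_vertex_V V v) (del_vertex_E E v)"
    and "{a, b} \<in> E" "a \<in> \<Union>\<K>"
  shows "b \<in> \<Union>\<K> \<union> {v}"
proof (cases "b = v")
  case False
  obtain K where K: "K \<in> \<K>" "a \<in> K" using \<open>a \<in> \<Union>\<K>\<close> by blast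
  then have "a \<noteq> v" using assms(2) components_subset by (fastforce simp: del_vertex_V_def)
  with False have "{a, b} \<in> del_vertex_E E v" using assms(3) by (simp add: del_vertex_E_def)
  moreover have "b \<in> del_vertex_V V v"
    using simple_graph_edge_vertices[OF assms(1,3)] False by (simp add: del_vertex_V_def)
  ultimately have "b \<in> K" using K assms(2) by (blast intro: components_edge_closed)
  with K show ?thesis by blast
qed simp

theorem lemma3p2:
  fixes VF :: "'a set" and EF :: "'a set set" and v :: 'a
    and S :: "'a set set" and \<mu> :: "('a \<times> bool) set \<Rightarrow> real"
  assumes "simple_graph VF EF"
    and "cut_vertex VF EF v"
    and "card (components (del_vertex_V VF v) (del_vertex_E EF v)) \<ge> 2"
    and "S \<subseteq> components (del_vertex_V VF v) (del_vertex_E EF v)"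
    and "bunkbed_conj (\<Union>(components (del_vertex_V VF v) (del_vertex_E EF v) - S) \<union> {v})
           (induced_E EF (\<Union>(components (del_vertex_V VF v) (del_vertex_E EF v) - S) \<union> {v}))"
    and "symmetric_weight VF EF \<mu>"
    and "x \<in> \<Union>(components (del_vertex_V VF v) (del_vertex_E EF v) - S) \<union> {v}"
    and "y \<in> \<Union>(components (del_vertex_V VF v) (del_vertex_E EF v) - S) \<union> {v}"
  shows "perc_prob (bb_E VF EF) \<mu> (\<lambda>X. joined X (x, False) (y, True))
           \<le> perc_prob (bb_E VF EF) \<mu> (\<lambda>X. joined X (x, False) (y, False))"
proof -
  define W where "W = \<Union>(components (del_vertex_V VF v) (del_vertex_E EF v) - S) \<union> {v}"
  define p where "p = perc_prob (bb_E VF EF - bb_E W (induced_E EF W)) \<mu>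
                        (\<lambda>X. joined X (v, False) (v, True))"
  have "v \<in> VF" using assms(2) by (simp add: cut_vertex_def)
  then have "W \<subseteq> VF" "v \<in> W"
    by (auto simp: W_def del_vertex_V_def dest: components_subset)
  have closed: "b \<in> W" if "{a, b} \<in> EF" "a \<in> W" "a \<noteq> v" for a b
    using cut_side_closed[OF assms(1) Diff_subset that(1)] that(2,3) by (simp add: W_def)
  have "finite (bb_E VF EF - bb_E W (induced_E EF W))"
    and "weight (bb_E VF EF - bb_E W (induced_E EF W)) \<mu>"
    using finite_bb_E[OF assms(1)] assms(6) by (auto simp: symmetric_weight_def weight_def)
  then have "0 \<le> p" "p \<le> 1" unfolding p_def by (simp_all add: perc_prob_nonneg perc_prob_le_1)
  with assms(6) \<open>W \<subseteq> VF\<close> \<open>v \<in> W\<close>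
  have "symmetric_weight W (induced_E EF W) (weight_parallel {(v, False), (v, True)} p \<mu>)"
    by (rule symmetric_weight_parallel)
  moreover have "x \<in> W" "y \<in> W" using assms(7,8) by (simp_all add: W_def)
  moreover have "bunkbed_conj W (induced_E EF W)" unfolding W_def by (rule assms(5))
  ultimately show ?thesis
    using perc_prob_bunkbed_induced[OF assms(1) \<open>W \<subseteq> VF\<close> \<open>v \<in> W\<close> closed]
    by (simp add: bunkbed_conj_def p_def)
qed

end
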